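(* Let $P=(X,\prec)$ be a finite twin-free interval order containing no induced subposet isomorphic to any of $\mathbf{4}+\mathbf{1}$, $\mathbf{3}+\mathbf{1}+\mathbf{1}$, $Z$, $D$, $Y$, or the dual of $Y$, and let $\mathcal I=\{I(z)=[L(z),R(z)]:z\in X\}$ be a closed interval representation of $P$ such that (1) no interval strictly contains two other intervals, (2) no interval is strictly contained in two other intervals, and (3) whenever $I(u)\subsetneq I(v)$ there are unique $x,y\in X$ with $x$ peeking into $vu$ from the left and $y$ peeking into $vu$ from the right. Fix a proper inclusion $I(u)\subsetneq I(v)$ with left peeker $x$ and right peeker $y$, and replace $I(x)$ by $[L(x),L(v)]$ and $I(y)$ by $[R(v),R(y)]$, leaving all other intervals unchanged. Then the resulting set of closed intervals is again a closed interval representation of $P$, it again satisfies (1), (2), (3), and it has the same proper inclusions as $\mathcal I$ (that is, for all $a,b\in X$ the new interval of $a$ is properly contained in the new interval of $b$ if and only if $I(a)\subsetneq I(b)$).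
   Context: Posets are strict (irreflexive) partial orders; twins are points with exactly the same comparabilities; twin-free means no two distinct twins. A closed interval representation of $P$ assigns a closed real interval $[L(x),R(x)]$ to each $x$ with $x\prec y$ iff $R(x)<L(y)$; $P$ is an interval order if one exists. $I(u)$ is strictly contained in $I(v)$ if $I(u)\subset I(v)$ and they do not have identical endpoints. For $I(u)\subsetneq I(v)$: $x$ peeks into $vu$ if $I(x)$ meets $I(v)$ but not $I(u)$; from the left if moreover $R(x)\le L(u)$; from the right if moreover $R(u)\le L(x)$. Forbidden posets (unlisted, non-transitively-implied pairs incomparable): $\mathbf{4}+\mathbf{1}$: $a\prec b\prec c\prec d$ plus isolated $x$. $\mathbf{3}+\mathbf{1}+\mathbf{1}$: $a\prec b\prec c$ plus isolated $x,y$. $Z$: $a,b,c,d,x,y$ with $a\prec b\prec c\prec d$, $x\prec d$, $a\prec y$. $D$: $a,b,c,d,x$ with $a\prec b\prec d$, $a\prec c\prec d$. $Y$: $a,b,c,d,x$ with $a\prec d\prec b$, $a\prec d\prec c$. The dual reverses all comparabilities. *)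

theory Defs
  imports Complex_Main
begin

definition strict_poset :: "'a set \<Rightarrow> ('a \<Rightarrow> 'a \<Rightarrow> bool) \<Rightarrow> bool" where
  "strict_poset X lt \<longleftrightarrow>
     (\<forall>x\<in>X. \<not> lt x x) \<and>
     (\<forall>x\<in>X. \<forall>y\<in>X. \<forall>z\<in>X. lt x y \<longrightarrow> lt y z \<longrightarrow> lt x z)"

definition twins :: "'a set \<Rightarrow> ('a \<Rightarrow> 'a \<Rightarrow> bool) \<Rightarrow> 'a \<Rightarrow> 'a \<Rightarrow> bool" where
  "twins X lt x y \<longleftrightarrow> (\<forall>z\<in>X. (lt x z \<longleftrightarrow> lt y z) \<and> (lt z x \<longleftrightarrow> lt z y))"

definition twin_free :: "'a set \<Rightarrow> ('a \<Rightarrow> 'a \<Rightarrow> bool) \<Rightarrow> bool" where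
  "twin_free X lt \<longleftrightarrow> (\<forall>x\<in>X. \<forall>y\<in>X. x \<noteq> y \<longrightarrow> \<not> twins X lt x y)"

definition interval_rep ::
  "'a set \<Rightarrow> ('a \<Rightarrow> 'a \<Rightarrow> bool) \<Rightarrow> ('a \<Rightarrow> real) \<Rightarrow> ('a \<Rightarrow> real) \<Rightarrow> bool" where
  "interval_rep X lt L R \<longleftrightarrow>
     (\<forall>x\<in>X. L x \<le> R x) \<and> (\<forall>x\<in>X. \<forall>y\<in>X. lt x y \<longleftrightarrow> R x < L y)"

definition interval_order :: "'a set \<Rightarrow> ('a \<Rightarrow> 'a \<Rightarrow> bool) \<Rightarrow> bool" where
  "interval_order X lt \<longleftrightarrow> strict_poset X lt \<and> (\<exists>L R. interval_rep X lt L R)"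

definition contains_induced ::
  "'a set \<Rightarrow> ('a \<Rightarrow> 'a \<Rightarrow> bool) \<Rightarrow> 'b set \<Rightarrow> ('b \<Rightarrow> 'b \<Rightarrow> bool) \<Rightarrow> bool" where
  "contains_induced X lt Y q \<longleftrightarrow>
     (\<exists>f. inj_on f Y \<and> f ` Y \<subseteq> X \<and> (\<forall>a\<in>Y. \<forall>b\<in>Y. lt (f a) (f b) \<longleftrightarrow> q a b))"

text \<open>Forbidden posets, on ground sets {0..4} or {0..5} (all comparabilities listed,
  including transitively implied ones).\<close>

text \<open>4+1: a=0<b=1<c=2<d=3, x=4 isolated.\<close>
definition four_plus_one :: "nat \<Rightarrow> nat \<Rightarrow> bool" where
  "four_plus_one i j \<longleftrightarrow> i < j \<and> j \<le> 3"

text \<open>3+1+1: a=0<b=1<c=2, x=3, y=4 isolated.\<close>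
definition three_plus_one_plus_one :: "nat \<Rightarrow> nat \<Rightarrow> bool" where
  "three_plus_one_plus_one i j \<longleftrightarrow> i < j \<and> j \<le> 2"

text \<open>Z: a=0<b=1<c=2<d=3, x=4<d, a<y=5.\<close>
definition Z_poset :: "nat \<Rightarrow> nat \<Rightarrow> bool" where
  "Z_poset i j \<longleftrightarrow> (i < j \<and> j \<le> 3) \<or> (i, j) = (4, 3) \<or> (i, j) = (0, 5)"

text \<open>D: a=0<b=1<d=3, a<c=2<d, x=4 isolated.\<close>
definition D_poset :: "nat \<Rightarrow> nat \<Rightarrow> bool" where
  "D_poset i j \<longleftrightarrow> (i, j) \<in> {(0,1), (0,2), (0,3), (1,3), (2,3)}"

text \<open>Y: a=0<d=3<b=1, a<d<c=2, x=4 isolated.\<close>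
definition Y_poset :: "nat \<Rightarrow> nat \<Rightarrow> bool" where
  "Y_poset i j \<longleftrightarrow> (i, j) \<in> {(0,3), (3,1), (3,2), (0,1), (0,2)}"

definition dual_rel :: "('b \<Rightarrow> 'b \<Rightarrow> bool) \<Rightarrow> 'b \<Rightarrow> 'b \<Rightarrow> bool" where
  "dual_rel q a b \<longleftrightarrow> q b a"

definition strictly_in :: "('a \<Rightarrow> real) \<Rightarrow> ('a \<Rightarrow> real) \<Rightarrow> 'a \<Rightarrow> 'a \<Rightarrow> bool" where
  "strictly_in L R u v \<longleftrightarrow>
     L v \<le> L u \<and> R u \<le> R v \<and> (L u, R u) \<noteq> (L v, R v)"

definition meets :: "('a \<Rightarrow> real) \<Rightarrow> ('a \<Rightarrow> real) \<Rightarrow> 'a \<Rightarrow> 'a \<Rightarrow> bool" where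
  "meets L R x y \<longleftrightarrow> L x \<le> R y \<and> L y \<le> R x"

definition peeks :: "('a \<Rightarrow> real) \<Rightarrow> ('a \<Rightarrow> real) \<Rightarrow> 'a \<Rightarrow> 'a \<Rightarrow> 'a \<Rightarrow> bool" where
  "peeks L R x v u \<longleftrightarrow> meets L R x v \<and> \<not> meets L R x u"

definition peeks_left :: "('a \<Rightarrow> real) \<Rightarrow> ('a \<Rightarrow> real) \<Rightarrow> 'a \<Rightarrow> 'a \<Rightarrow> 'a \<Rightarrow> bool" where
  "peeks_left L R x v u \<longleftrightarrow> peeks L R x v u \<and> R x \<le> L u"

definition peeks_right :: "('a \<Rightarrow> real) \<Rightarrow> ('a \<Rightarrow> real) \<Rightarrow> 'a \<Rightarrow> 'a \<Rightarrow> 'a \<Rightarrow> bool" where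
  "peeks_right L R y v u \<longleftrightarrow> peeks L R y v u \<and> R u \<le> L y"

definition cond1 :: "'a set \<Rightarrow> ('a \<Rightarrow> real) \<Rightarrow> ('a \<Rightarrow> real) \<Rightarrow> bool" where
  "cond1 X L R \<longleftrightarrow> \<not> (\<exists>v\<in>X. \<exists>a\<in>X. \<exists>b\<in>X. a \<noteq> b \<and> strictly_in L R a v \<and> strictly_in L R b v)"

definition cond2 :: "'a set \<Rightarrow> ('a \<Rightarrow> real) \<Rightarrow> ('a \<Rightarrow> real) \<Rightarrow> bool" where
  "cond2 X L R \<longleftrightarrow> \<not> (\<exists>u\<in>X. \<exists>a\<in>X. \<exists>b\<in>X. a \<noteq> b \<and> strictly_in L R u a \<and> strictly_in L R u b)"

definition cond3 :: "'a set \<Rightarrow> ('a \<Rightarrow> real) \<Rightarrow> ('a \<Rightarrow> real) \<Rightarrow> bool" where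
  "cond3 X L R \<longleftrightarrow> (\<forall>u\<in>X. \<forall>v\<in>X. strictly_in L R u v \<longrightarrow>
      (\<exists>!x. x \<in> X \<and> peeks_left L R x v u) \<and> (\<exists>!y. y \<in> X \<and> peeks_right L R y v u))"

end

theory Submission
  imports Defs
begin

text \<open>Conditions (1) and (2), together with the uniqueness of peekers in (3), force the stretch
  between L(v) and R(x) to contain no endpoint of another interval, and likewise the stretch between
  L(y) and R(v). Sliding R(x) down to L(v) and L(y) up to R(v) therefore changes no comparison between
  endpoints that matters: neither the order R(a) < L(b) nor the strict inclusions. Conditions
  (1)-(3) are then inherited, because they depend only on the strict inclusions and on the order
  (a left peeker into vu is just an element incomparable to v and below u).\<close>

definition same_strict_inclusions ::
  "'a set \<Rightarrow> ('a \<Rightarrow> real) \<Rightarrow> ('a \<Rightarrow> real) \<Rightarrow> ('a \<Rightarrow> real) \<Rightarrow> ('a \<Rightarrow> real) \<Rightarrow> bool" where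
  "same_strict_inclusions X L R L' R' \<longleftrightarrow>
     (\<forall>a\<in>X. \<forall>b\<in>X. strictly_in L' R' a b \<longleftrightarrow> strictly_in L R a b)"

lemma same_strict_inclusions_trans:
  "same_strict_inclusions X L R L' R' \<Longrightarrow> same_strict_inclusions X L' R' L'' R'' \<Longrightarrow>
   same_strict_inclusions X L R L'' R''"
  unfolding same_strict_inclusions_def by simp

lemma strictly_in_iff:
  "strictly_in L R a b \<longleftrightarrow> L b \<le> L a \<and> R a \<le> R b \<and> (L a \<noteq> L b \<or> R a \<noteq> R b)"
  unfolding strictly_in_def by auto

lemma interval_rep_le:
  "interval_rep X lt L R \<Longrightarrow> a \<in> X \<Longrightarrow> L a \<le> R a"
  unfolding interval_rep_def by blast

lemma interval_rep_less_iff: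
  "interval_rep X lt L R \<Longrightarrow> a \<in> X \<Longrightarrow> b \<in> X \<Longrightarrow> lt a b \<longleftrightarrow> R a < L b"
  unfolding interval_rep_def by blast

lemma peeks_left_iff:
  assumes "interval_rep X lt L R" "p \<in> X" "v \<in> X" "u \<in> X"
  shows "peeks_left L R p v u \<longleftrightarrow> \<not> lt p v \<and> \<not> lt v p \<and> lt p u"
  using assms unfolding interval_rep_def peeks_left_def peeks_def meets_def by (smt (verit))

lemma peeks_right_iff:
  assumes "interval_rep X lt L R" "p \<in> X" "v \<in> X" "u \<in> X"
  shows "peeks_right L R p v u \<longleftrightarrow> \<not> lt p v \<and> \<not> lt v p \<and> lt u p"
  using assms unfolding interval_rep_def peeks_right_def peeks_def meets_def by (smt (verit))

lemma cond1_if_same_strict_inclusions: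
  "cond1 X L R \<Longrightarrow> same_strict_inclusions X L R L' R' \<Longrightarrow> cond1 X L' R'"
  unfolding cond1_def same_strict_inclusions_def by metis

lemma cond2_if_same_strict_inclusions:
  "cond2 X L R \<Longrightarrow> same_strict_inclusions X L R L' R' \<Longrightarrow> cond2 X L' R'"
  unfolding cond2_def same_strict_inclusions_def by metis

lemma cond3_if_same_strict_inclusions:
  assumes rep: "interval_rep X lt L R" and rep': "interval_rep X lt L' R'"
    and "same_strict_inclusions X L R L' R'" and "cond3 X L R"
  shows "cond3 X L' R'"
proof -
  have "peeks_left L' R' p v u \<longleftrightarrow> peeks_left L R p v u"
    and "peeks_right L' R' p v u \<longleftrightarrow> peeks_right L R p v u"
    if "p \<in> X" "v \<in> X" "u \<in> X" for p v u
    using peeks_left_iff[OF rep that] peeks_left_iff[OF rep' that]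
      peeks_right_iff[OF rep that] peeks_right_iff[OF rep' that] by simp_all
  then show ?thesis
    using assms(3,4) unfolding cond3_def same_strict_inclusions_def by (metis (no_types, lifting))
qed

lemma interval_rep_shrink_right:
  assumes rep: "interval_rep X lt L R" and "L x \<le> c" "c \<le> R x"
    and no_left_end: "\<And>b. b \<in> X \<Longrightarrow> \<not> (c < L b \<and> L b \<le> R x)"
  shows "interval_rep X lt L (R(x := c))"
  unfolding interval_rep_def
proof (intro conjI ballI)
  fix a b assume "a \<in> X" "b \<in> X"
  then show "lt a b \<longleftrightarrow> (R(x := c)) a < L b"
    using interval_rep_less_iff[OF rep] no_left_end \<open>c \<le> R x\<close> by force
qed (use rep \<open>L x \<le> c\<close> interval_rep_le in auto)

lemma interval_rep_shrink_left:
  assumes rep: "interval_rep X lt L R" and "L y \<le> c" "c \<le> R y"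
    and no_right_end: "\<And>b. b \<in> X \<Longrightarrow> \<not> (L y \<le> R b \<and> R b < c)"
  shows "interval_rep X lt (L(y := c)) R"
  unfolding interval_rep_def
proof (intro conjI ballI)
  fix a b assume "a \<in> X" "b \<in> X"
  then show "lt a b \<longleftrightarrow> R a < (L(y := c)) b"
    using interval_rep_less_iff[OF rep] no_right_end \<open>L y \<le> c\<close> by force
qed (use rep \<open>c \<le> R y\<close> interval_rep_le in auto)

lemma same_strict_inclusions_shrink_right:
  assumes "c \<le> R x"
    and "\<And>b. b \<in> X \<Longrightarrow> b \<noteq> x \<Longrightarrow> \<not> (c \<le> R b \<and> R b \<le> R x)"
  shows "same_strict_inclusions X L R L (R(x := c))"
  unfolding same_strict_inclusions_def strictly_in_iff
  using assms by (smt (verit) fun_upd_apply)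

lemma same_strict_inclusions_shrink_left:
  assumes "L y \<le> c"
    and "\<And>b. b \<in> X \<Longrightarrow> b \<noteq> y \<Longrightarrow> \<not> (L y \<le> L b \<and> L b \<le> c)"
  shows "same_strict_inclusions X L R (L(y := c)) R"
  unfolding same_strict_inclusions_def strictly_in_iff
  using assms by (smt (verit) fun_upd_apply)

locale inclusion_with_peekers =
  fixes X :: "'a set" and lt :: "'a \<Rightarrow> 'a \<Rightarrow> bool"
    and L R :: "'a \<Rightarrow> real" and u v x y :: 'a
  assumes rep: "interval_rep X lt L R"
    and cond1: "cond1 X L R" and cond2: "cond2 X L R" and cond3: "cond3 X L R"
    and u_in: "u \<in> X" and v_in: "v \<in> X" and u_in_v: "strictly_in L R u v"
    and x_in: "x \<in> X" and x_peeks: "peeks_left L R x v u"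
    and y_in: "y \<in> X" and y_peeks: "peeks_right L R y v u"
begin

lemma u_v_ends: "L v \<le> L u" "R u \<le> R v" "L u \<noteq> L v \<or> R u \<noteq> R v"
  using u_in_v unfolding strictly_in_iff by auto

lemma left_peeker_ends: "L x \<le> R v" "L v \<le> R x" "R x < L u"
  using x_peeks peeks_left_iff[OF rep x_in v_in u_in] interval_rep_less_iff[OF rep] x_in u_in
  unfolding peeks_left_def peeks_def meets_def by auto

lemma right_peeker_ends: "L y \<le> R v" "L v \<le> R y" "R u < L y"
  using y_peeks peeks_right_iff[OF rep y_in v_in u_in] interval_rep_less_iff[OF rep] y_in u_in
  unfolding peeks_right_def peeks_def meets_def by auto

lemma peekers_distinct: "x \<noteq> y"
  using left_peeker_ends right_peeker_ends interval_rep_le[OF rep u_in] interval_rep_le[OF rep x_in]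
  by auto

lemma strictly_in_v_imp_eq_u: "b \<in> X \<Longrightarrow> strictly_in L R b v \<Longrightarrow> b = u"
  using cond1 u_in v_in u_in_v unfolding cond1_def by blast

lemma strictly_contains_u_imp_eq_v: "b \<in> X \<Longrightarrow> strictly_in L R u b \<Longrightarrow> b = v"
  using cond2 u_in v_in u_in_v unfolding cond2_def by blast

lemma left_peeker_unique: "b \<in> X \<Longrightarrow> peeks_left L R b v u \<Longrightarrow> b = x"
  using cond3 u_in v_in u_in_v x_in x_peeks unfolding cond3_def by blast

lemma right_peeker_unique: "b \<in> X \<Longrightarrow> peeks_right L R b v u \<Longrightarrow> b = y"
  using cond3 u_in v_in u_in_v y_in y_peeks unfolding cond3_def by blast

lemma L_left_peeker_le: "L x \<le> L v"
proof (rule ccontr)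
  assume "\<not> L x \<le> L v"
  then have "strictly_in L R x v"
    using left_peeker_ends u_v_ends interval_rep_le[OF rep u_in] unfolding strictly_in_iff by auto
  then show False
    using strictly_in_v_imp_eq_u[OF x_in] left_peeker_ends u_v_ends interval_rep_le[OF rep u_in] by auto
qed

lemma R_right_peeker_ge: "R v \<le> R y"
proof (rule ccontr)
  assume "\<not> R v \<le> R y"
  then have "strictly_in L R y v"
    using right_peeker_ends u_v_ends interval_rep_le[OF rep u_in] unfolding strictly_in_iff by auto
  then show False
    using strictly_in_v_imp_eq_u[OF y_in] right_peeker_ends u_v_ends interval_rep_le[OF rep u_in] by auto
qed

lemma no_left_end_in_left_gap:
  assumes "b \<in> X" shows "\<not> (L v < L b \<and> L b \<le> R x)"
proof
  assume b: "L v < L b \<and> L b \<le> R x"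
  show False
  proof (cases "R b \<le> R v")
    case True
    then have "strictly_in L R b v" using b unfolding strictly_in_iff by auto
    then show False using strictly_in_v_imp_eq_u[OF assms] b left_peeker_ends by auto
  next
    case False
    then have "strictly_in L R u b" using b left_peeker_ends u_v_ends unfolding strictly_in_iff by auto
    then show False using strictly_contains_u_imp_eq_v[OF assms] b by auto
  qed
qed

lemma no_right_end_in_right_gap:
  assumes "b \<in> X" shows "\<not> (L y \<le> R b \<and> R b < R v)"
proof
  assume b: "L y \<le> R b \<and> R b < R v"
  show False
  proof (cases "L v \<le> L b")
    case True
    then have "strictly_in L R b v" using b unfolding strictly_in_iff by auto
    then show False using strictly_in_v_imp_eq_u[OF assms] b right_peeker_ends by auto
  next
    case False
    then have "strictly_in L R u b" using b right_peeker_ends u_v_ends unfolding strictly_in_iff by auto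
    then show False using strictly_contains_u_imp_eq_v[OF assms] b by auto
  qed
qed

lemma no_other_right_end_near_left_peeker:
  assumes "b \<in> X" "b \<noteq> x" shows "\<not> (L v \<le> R b \<and> R b \<le> R x)"
proof
  assume b: "L v \<le> R b \<and> R b \<le> R x"
  have "L b \<le> L v" using no_left_end_in_left_gap[OF assms(1)] b interval_rep_le[OF rep assms(1)] by auto
  then have "peeks_left L R b v u"
    using b left_peeker_ends u_v_ends interval_rep_le[OF rep u_in]
    unfolding peeks_left_def peeks_def meets_def by auto
  then show False using left_peeker_unique assms by blast
qed

lemma no_other_left_end_near_right_peeker:
  assumes "b \<in> X" "b \<noteq> y" shows "\<not> (L y \<le> L b \<and> L b \<le> R v)"
proof
  assume b: "L y \<le> L b \<and> L b \<le> R v"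
  have "R v \<le> R b" using no_right_end_in_right_gap[OF assms(1)] b interval_rep_le[OF rep assms(1)] by auto
  then have "peeks_right L R b v u"
    using b right_peeker_ends u_v_ends interval_rep_le[OF rep u_in] interval_rep_le[OF rep assms(1)]
    unfolding peeks_right_def peeks_def meets_def by auto
  then show False using right_peeker_unique assms by blast
qed

lemma rep_after_shrinking_left_peeker: "interval_rep X lt L (R(x := L v))"
  by (rule interval_rep_shrink_right[OF rep L_left_peeker_le left_peeker_ends(2)
        no_left_end_in_left_gap])

lemma rep_after_shrinking_both_peekers: "interval_rep X lt (L(y := R v)) (R(x := L v))"
proof (rule interval_rep_shrink_left[OF rep_after_shrinking_left_peeker])
  show "L y \<le> R v" "R v \<le> (R(x := L v)) y"
    using right_peeker_ends R_right_peeker_ge peekers_distinct by auto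
  show "\<not> (L y \<le> (R(x := L v)) b \<and> (R(x := L v)) b < R v)" if "b \<in> X" for b
    using no_right_end_in_right_gap[OF that] right_peeker_ends u_v_ends interval_rep_le[OF rep u_in]
    by auto
qed

lemma same_strict_inclusions_after_shrinking_both_peekers:
  "same_strict_inclusions X L R (L(y := R v)) (R(x := L v))"
proof (rule same_strict_inclusions_trans)
  show "same_strict_inclusions X L R L (R(x := L v))"
    by (rule same_strict_inclusions_shrink_right[where R = R, OF left_peeker_ends(2)
          no_other_right_end_near_left_peeker])
  show "same_strict_inclusions X L (R(x := L v)) (L(y := R v)) (R(x := L v))"
    by (rule same_strict_inclusions_shrink_left[where L = L, OF right_peeker_ends(1)
          no_other_left_end_near_right_peeker])
qed

end

theorem proposition14:
  fixes X :: "'a set" and lt :: "'a \<Rightarrow> 'a \<Rightarrow> bool"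
    and L R :: "'a \<Rightarrow> real" and u v x y :: 'a
  assumes "finite X"
    and "interval_order X lt"
    and "twin_free X lt"
    and "\<not> contains_induced X lt {0..4} four_plus_one"
    and "\<not> contains_induced X lt {0..4} three_plus_one_plus_one"
    and "\<not> contains_induced X lt {0..5} Z_poset"
    and "\<not> contains_induced X lt {0..4} D_poset"
    and "\<not> contains_induced X lt {0..4} Y_poset"
    and "\<not> contains_induced X lt {0..4} (dual_rel Y_poset)"
    and "interval_rep X lt L R"
    and "cond1 X L R" and "cond2 X L R" and "cond3 X L R"
    and "u \<in> X" and "v \<in> X" and "strictly_in L R u v"
    and "x \<in> X" and "peeks_left L R x v u"
    and "y \<in> X" and "peeks_right L R y v u"
  shows "interval_rep X lt (L(y := R v)) (R(x := L v)) \<and>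
         cond1 X (L(y := R v)) (R(x := L v)) \<and>
         cond2 X (L(y := R v)) (R(x := L v)) \<and>
         cond3 X (L(y := R v)) (R(x := L v)) \<and>
         (\<forall>a\<in>X. \<forall>b\<in>X. strictly_in (L(y := R v)) (R(x := L v)) a b \<longleftrightarrow> strictly_in L R a b)"
  \<comment> \<open>Only the interval representation and (1)-(3) are needed.\<close>
proof -
  interpret inclusion_with_peekers X lt L R u v x y
    using assms(10-20) by unfold_locales
  note rep' = rep_after_shrinking_both_peekers
  note same = same_strict_inclusions_after_shrinking_both_peekers
  show ?thesis
  proof (intro conjI)
    show "cond1 X (L(y := R v)) (R(x := L v))"
      by (rule cond1_if_same_strict_inclusions[OF cond1 same])
    show "cond2 X (L(y := R v)) (R(x := L v))"
      by (rule cond2_if_same_strict_inclusions[OF cond2 same])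
    show "cond3 X (L(y := R v)) (R(x := L v))"
      by (rule cond3_if_same_strict_inclusions[OF rep rep' same cond3])
  qed (use rep' same in \<open>simp_all add: same_strict_inclusions_def\<close>)
qed

end
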